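(* Let $X$ be a compact Hausdorff space and $T:X\to X$ a covering map. Let $\ell^2(X)$ be the Hilbert space with orthonormal basis $(e_x)_{x\in X}$, for $f\in C(X)$ let $M_f$ be the operator $M_fe_x=f(x)e_x$, and let $S$ be the bounded operator $Se_x=(L_0(1_X)(x))^{-1/2}\sum_{y\in T^{-1}(\{x\})}e_y$. Then there exists a representation $\psi$ of $C(X)\rtimes_{\alpha,\mathcal{L}}\mathbb{N}$ on $\ell^2(X)$ with $\psi(f)=M_f$ for all $f\in C(X)$ and $\psi(s)=S$. Moreover $\ker(\psi)\cap C(X)=\{0\}$.
   Context: $T:X\to X$ is a covering map: continuous, surjective, and every point has an open neighbourhood $V$ with $T^{-1}(V)$ a disjoint union of open sets each mapped homeomorphically onto $V$ by $T$. Define $\alpha(f)=f\circ T$, $L_0(f)(x)=\sum_{y\in T^{-1}(\{x\})}f(y)$, $\mathcal{L}(f)=L_0(1_X)^{-1}L_0(f)$ on $C(X)$. Choose a finite open cover $\{V_i\}_{i=1}^t$ of $X$ with $T|_{V_i}$ injective, a subordinate partition of unity $\{v_i\}$, and $u_i=(\alpha(L_0(1_X))v_i)^{1/2}$. $C(X)\rtimes_{\alpha,\mathcal{L}}\mathbb{N}$ is the universal $C^*$-algebra generated by a unital copy of $C(X)$ and an isometry $s$ subject to $sf=\alpha(f)s$, $s^*fs=\mathcal{L}(f)$ ($f\in C(X)$), and $1=\sum_{i=1}^t u_iss^*u_i$; $C(X)$ is identified with its canonical image. *)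

theory Defs
  imports "HOL-Analysis.Analysis"
begin

text \<open>Complex scalar
  multiplication is an extra operation compatible with the real one.\<close>

class cstar_algebra = real_normed_algebra_1 + banach +
  fixes cscale :: "complex \<Rightarrow> 'a \<Rightarrow> 'a"
    and cstar :: "'a \<Rightarrow> 'a"
  assumes cscale_of_real: "cscale (complex_of_real r) a = r *\<^sub>R a"
    and cscale_add_left: "cscale (c + d) a = cscale c a + cscale d a"
    and cscale_add_right: "cscale c (a + b) = cscale c a + cscale c b"
    and cscale_cscale: "cscale c (cscale d a) = cscale (c * d) a"
    and norm_cscale: "norm (cscale c a) = cmod c * norm a"
    and cscale_left_mult: "cscale c a * b = cscale c (a * b)"
    and cscale_right_mult: "a * cscale c b = cscale c (a * b)"
    and cstar_add: "cstar (a + b) = cstar a + cstar b"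
    and cstar_mult: "cstar (a * b) = cstar b * cstar a"
    and cstar_cscale: "cstar (cscale c a) = cscale (cnj c) (cstar a)"
    and cstar_cstar: "cstar (cstar a) = a"
    and cstar_identity: "norm (cstar a * a) = (norm a)\<^sup>2"

text \<open>A bounded operator \<open>A\<close> on \<open>\<ell>\<^sup>2(X)\<close> (orthonormal basis \<open>e\<^sub>x\<close>) is represented
  faithfully by its matrix \<open>m x y = \<langle>e\<^sub>x, A e\<^sub>y\<rangle>\<close>.\<close>

type_synonym 'x bmat = "'x \<Rightarrow> 'x \<Rightarrow> complex"

definition fin_vec :: "('x \<Rightarrow> complex) \<Rightarrow> bool" where
  "fin_vec v \<longleftrightarrow> finite {x. v x \<noteq> 0}"

definition l2_norm :: "('x \<Rightarrow> complex) \<Rightarrow> real" where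
  "l2_norm v = sqrt (infsum (\<lambda>x. (cmod (v x))\<^sup>2) UNIV)"

definition mat_app :: "'x bmat \<Rightarrow> ('x \<Rightarrow> complex) \<Rightarrow> ('x \<Rightarrow> complex)" where
  "mat_app m v = (\<lambda>x. \<Sum>y\<in>{y. v y \<noteq> 0}. m x y * v y)"

definition bounded_mat :: "'x bmat \<Rightarrow> bool" where
  "bounded_mat m \<longleftrightarrow> (\<exists>C. \<forall>v. fin_vec v \<longrightarrow>
      (\<lambda>x. (cmod (mat_app m v x))\<^sup>2) summable_on UNIV \<and>
      l2_norm (mat_app m v) \<le> C * l2_norm v)"

definition mat_mult :: "'x bmat \<Rightarrow> 'x bmat \<Rightarrow> 'x bmat" where
  "mat_mult m n = (\<lambda>x y. infsum (\<lambda>z. m x z * n z y) UNIV)"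

definition mat_adj :: "'x bmat \<Rightarrow> 'x bmat" where
  "mat_adj m = (\<lambda>x y. cnj (m y x))"

definition mat_add :: "'x bmat \<Rightarrow> 'x bmat \<Rightarrow> 'x bmat" where
  "mat_add m n = (\<lambda>x y. m x y + n x y)"

definition mat_scale :: "complex \<Rightarrow> 'x bmat \<Rightarrow> 'x bmat" where
  "mat_scale c m = (\<lambda>x y. c * m x y)"

definition mat_id :: "'x bmat" where
  "mat_id = (\<lambda>x y. if x = y then 1 else 0)"

definition mat_zero :: "'x bmat" where
  "mat_zero = (\<lambda>x y. 0)"

definition is_rep :: "('a::cstar_algebra \<Rightarrow> 'x bmat) \<Rightarrow> bool" where
  "is_rep \<psi> \<longleftrightarrow>
     (\<forall>a. bounded_mat (\<psi> a)) \<and>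
     (\<forall>a b. \<psi> (a + b) = mat_add (\<psi> a) (\<psi> b)) \<and>
     (\<forall>a b. \<psi> (a * b) = mat_mult (\<psi> a) (\<psi> b)) \<and>
     (\<forall>c a. \<psi> (cscale c a) = mat_scale c (\<psi> a)) \<and>
     (\<forall>a. \<psi> (cstar a) = mat_adj (\<psi> a))"

definition cont_fun :: "('x::topological_space \<Rightarrow> complex) \<Rightarrow> bool" where
  "cont_fun f \<longleftrightarrow> continuous_on UNIV f"

definition alpha_op :: "('x \<Rightarrow> 'x) \<Rightarrow> ('x \<Rightarrow> 'b) \<Rightarrow> ('x \<Rightarrow> 'b)" where
  "alpha_op T f = f \<circ> T"

definition L0 :: "('x \<Rightarrow> 'x) \<Rightarrow> ('x \<Rightarrow> 'b::comm_monoid_add) \<Rightarrow> ('x \<Rightarrow> 'b)" where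
  "L0 T f = (\<lambda>x. \<Sum>y\<in>T -` {x}. f y)"

definition Lcal :: "('x \<Rightarrow> 'x) \<Rightarrow> ('x \<Rightarrow> complex) \<Rightarrow> ('x \<Rightarrow> complex)" where
  "Lcal T f = (\<lambda>x. L0 T f x / L0 T (\<lambda>_. 1) x)"

definition u_fun :: "('x \<Rightarrow> 'x) \<Rightarrow> ('x \<Rightarrow> real) \<Rightarrow> ('x \<Rightarrow> complex)" where
  "u_fun T vi = (\<lambda>x. complex_of_real (sqrt (alpha_op T (L0 T (\<lambda>_. 1::real)) x * vi x)))"

definition admissible_cover ::
  "('x::topological_space \<Rightarrow> 'x) \<Rightarrow> nat \<Rightarrow> (nat \<Rightarrow> 'x set) \<Rightarrow> (nat \<Rightarrow> 'x \<Rightarrow> real) \<Rightarrow> bool" where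
  "admissible_cover T t V v \<longleftrightarrow>
     (\<forall>i<t. open (V i) \<and> inj_on T (V i)) \<and> (\<Union>i<t. V i) = UNIV \<and>
     (\<forall>i<t. continuous_on UNIV (v i) \<and> (\<forall>x. 0 \<le> v i x) \<and>
            closure {x. v i x \<noteq> 0} \<subseteq> V i) \<and>
     (\<forall>x. (\<Sum>i<t. v i x) = 1)"

text \<open>Multiplication operators and the operator \<open>S\<close> on \<open>\<ell>\<^sup>2(X)\<close>.
  \<open>S e\<^sub>y = L\<^sub>0(1)(y)\<^sup>-\<^sup>1\<^sup>/\<^sup>2 \<Sum>\<^sub>T\<^sub>x\<^sub>=\<^sub>y e\<^sub>x\<close>, so its matrix entry at \<open>(x,y)\<close> is nonzero iff \<open>T x = y\<close>.\<close>
definition mult_op :: "('x \<Rightarrow> complex) \<Rightarrow> 'x bmat" where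
  "mult_op f = (\<lambda>x y. if x = y then f x else 0)"

definition S_op :: "('x \<Rightarrow> 'x) \<Rightarrow> 'x bmat" where
  "S_op T = (\<lambda>x y. if T x = y then complex_of_real (1 / sqrt (L0 T (\<lambda>_. 1::real) y)) else 0)"

definition crossed_relations ::
  "('x::topological_space \<Rightarrow> 'x) \<Rightarrow> nat \<Rightarrow> (nat \<Rightarrow> 'x \<Rightarrow> real)
     \<Rightarrow> (('x \<Rightarrow> complex) \<Rightarrow> 'a::cstar_algebra) \<Rightarrow> 'a \<Rightarrow> bool" where
  "crossed_relations T t v \<iota> s \<longleftrightarrow>
     (\<forall>f g. cont_fun f \<longrightarrow> cont_fun g \<longrightarrow> \<iota> (\<lambda>x. f x + g x) = \<iota> f + \<iota> g) \<and>
     (\<forall>f g. cont_fun f \<longrightarrow> cont_fun g \<longrightarrow> \<iota> (\<lambda>x. f x * g x) = \<iota> f * \<iota> g) \<and>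
     (\<forall>c f. cont_fun f \<longrightarrow> \<iota> (\<lambda>x. c * f x) = cscale c (\<iota> f)) \<and>
     (\<forall>f. cont_fun f \<longrightarrow> \<iota> (\<lambda>x. cnj (f x)) = cstar (\<iota> f)) \<and>
     \<iota> (\<lambda>_. 1) = 1 \<and>
     cstar s * s = 1 \<and>
     (\<forall>f. cont_fun f \<longrightarrow> s * \<iota> f = \<iota> (alpha_op T f) * s) \<and>
     (\<forall>f. cont_fun f \<longrightarrow> cstar s * \<iota> f * s = \<iota> (Lcal T f)) \<and>
     1 = (\<Sum>i<t. \<iota> (u_fun T (v i)) * s * cstar s * \<iota> (u_fun T (v i)))"

definition crossed_relations_l2 ::
  "('x::topological_space \<Rightarrow> 'x) \<Rightarrow> nat \<Rightarrow> (nat \<Rightarrow> 'x \<Rightarrow> real)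
     \<Rightarrow> (('x \<Rightarrow> complex) \<Rightarrow> 'x bmat) \<Rightarrow> 'x bmat \<Rightarrow> bool" where
  "crossed_relations_l2 T t v \<pi> W \<longleftrightarrow>
     (\<forall>f. cont_fun f \<longrightarrow> bounded_mat (\<pi> f)) \<and> bounded_mat W \<and>
     (\<forall>f g. cont_fun f \<longrightarrow> cont_fun g \<longrightarrow> \<pi> (\<lambda>x. f x + g x) = mat_add (\<pi> f) (\<pi> g)) \<and>
     (\<forall>f g. cont_fun f \<longrightarrow> cont_fun g \<longrightarrow> \<pi> (\<lambda>x. f x * g x) = mat_mult (\<pi> f) (\<pi> g)) \<and>
     (\<forall>c f. cont_fun f \<longrightarrow> \<pi> (\<lambda>x. c * f x) = mat_scale c (\<pi> f)) \<and>
     (\<forall>f. cont_fun f \<longrightarrow> \<pi> (\<lambda>x. cnj (f x)) = mat_adj (\<pi> f)) \<and>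
     \<pi> (\<lambda>_. 1) = mat_id \<and>
     mat_mult (mat_adj W) W = mat_id \<and>
     (\<forall>f. cont_fun f \<longrightarrow> mat_mult W (\<pi> f) = mat_mult (\<pi> (alpha_op T f)) W) \<and>
     (\<forall>f. cont_fun f \<longrightarrow> mat_mult (mat_mult (mat_adj W) (\<pi> f)) W = \<pi> (Lcal T f)) \<and>
     mat_id = (\<lambda>x y. \<Sum>i<t. mat_mult (mat_mult (mat_mult (\<pi> (u_fun T (v i))) W)
                                   (mat_adj W)) (\<pi> (u_fun T (v i))) x y)"

inductive_set gen_alg :: "(('x::topological_space \<Rightarrow> complex) \<Rightarrow> 'a::cstar_algebra) \<Rightarrow> 'a \<Rightarrow> 'a set"
  for \<iota> s where
  gen_iota: "cont_fun f \<Longrightarrow> \<iota> f \<in> gen_alg \<iota> s"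
| gen_s: "s \<in> gen_alg \<iota> s"
| gen_one: "1 \<in> gen_alg \<iota> s"
| gen_add: "a \<in> gen_alg \<iota> s \<Longrightarrow> b \<in> gen_alg \<iota> s \<Longrightarrow> a + b \<in> gen_alg \<iota> s"
| gen_mult: "a \<in> gen_alg \<iota> s \<Longrightarrow> b \<in> gen_alg \<iota> s \<Longrightarrow> a * b \<in> gen_alg \<iota> s"
| gen_scale: "a \<in> gen_alg \<iota> s \<Longrightarrow> cscale c a \<in> gen_alg \<iota> s"
| gen_star: "a \<in> gen_alg \<iota> s \<Longrightarrow> cstar a \<in> gen_alg \<iota> s"

definition is_crossed_product ::
  "('x::topological_space \<Rightarrow> 'x) \<Rightarrow> nat \<Rightarrow> (nat \<Rightarrow> 'x \<Rightarrow> real)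
     \<Rightarrow> (('x \<Rightarrow> complex) \<Rightarrow> 'a::cstar_algebra) \<Rightarrow> 'a \<Rightarrow> bool" where
  "is_crossed_product T t v \<iota> s \<longleftrightarrow>
     crossed_relations T t v \<iota> s \<and>
     closure (gen_alg \<iota> s) = UNIV \<and>
     (\<forall>(\<pi> :: ('x \<Rightarrow> complex) \<Rightarrow> 'x bmat) W. crossed_relations_l2 T t v \<pi> W \<longrightarrow>
        (\<exists>!\<psi>. is_rep \<psi> \<and> (\<forall>f. cont_fun f \<longrightarrow> \<psi> (\<iota> f) = \<pi> f) \<and> \<psi> s = W))"

end

theory Submission imports Defs begin

(* By the universal property of the crossed product it suffices to show
   that the multiplication representation f \<mapsto> M_f together with S satisfies the
   defining relations on l2(X); the kernel statement is then immediate, because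
   M_f = 0 forces f = 0 and the canonical map sends the zero function to 0.

   All matrix computations reduce to finite sums: multiplication operators are
   diagonal, and column y of S is supported on the fibre T^-1{y}, which is finite
   because a covering map of a compact Hausdorff space is a local homeomorphism.
   Writing N(y) = |T^-1{y}| = L0(1)(y) (at least 1, since T is surjective), one gets
     S^* S = 1,   S M_f = M_(f o T) S,   S^* M_f S = M_(L f),
   and M_u S S^* M_u has entry u(x) u(y) / N(T x) when T x = T y, which for
   u = u_i vanishes off the diagonal (T is injective on V_i) and equals v_i(x) on it,
   so the relation 1 = \<Sum> u_i S S^* u_i becomes \<Sum> v_i = 1.
   The file develops: finitely supported sums, multiplication operators, fibres of
   T, the operator S, the partition-of-unity relation, and finally the theorem. *)

abbreviation fibre_size :: "('x \<Rightarrow> 'x) \<Rightarrow> 'x \<Rightarrow> real" where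
  "fibre_size T \<equiv> L0 T (\<lambda>_. 1::real)"

lemma infsum_finite_support:
  fixes g :: "'a \<Rightarrow> 'b::{comm_monoid_add,t2_space}"
  assumes "finite A" "\<And>z. z \<notin> A \<Longrightarrow> g z = 0"
  shows "infsum g UNIV = sum g A"
proof -
  have "infsum g A = infsum g UNIV"
    by (rule infsum_cong_neutral) (use assms in auto)
  thus ?thesis using assms(1) by simp
qed

lemma summable_finite_support:
  fixes g :: "'a \<Rightarrow> 'b::{comm_monoid_add,t2_space}"
  assumes "finite A" "\<And>z. z \<notin> A \<Longrightarrow> g z = 0"
  shows "g summable_on UNIV"
proof -
  have "g summable_on A \<longleftrightarrow> g summable_on UNIV"
    by (rule summable_on_cong_neutral) (use assms in auto)
  thus ?thesis using assms(1) by simp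
qed

lemma l2_norm_finite_support:
  assumes "finite A" "\<And>z. z \<notin> A \<Longrightarrow> w z = 0"
  shows "l2_norm w = sqrt (\<Sum>x\<in>A. (cmod (w x))\<^sup>2)"
  unfolding l2_norm_def by (subst infsum_finite_support[OF assms(1)]) (use assms(2) in auto)

lemma mat_mult_mult_op_right: "mat_mult K (mult_op f) = (\<lambda>x y. K x y * f y)"
  unfolding mat_mult_def
  by (intro ext, subst infsum_finite_support[of "{_}"]) (auto simp: mult_op_def)

lemma mat_mult_mult_op_left: "mat_mult (mult_op f) K = (\<lambda>x y. f x * K x y)"
  unfolding mat_mult_def
  by (intro ext, subst infsum_finite_support[of "{_}"]) (auto simp: mult_op_def)

lemma mat_app_mult_op:
  assumes "fin_vec w" shows "mat_app (mult_op f) w = (\<lambda>x. f x * w x)"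
proof (intro ext)
  fix x
  have "mat_app (mult_op f) w x = (\<Sum>y\<in>{y. w y \<noteq> 0}. if x = y then f x * w y else 0)"
    unfolding mat_app_def mult_op_def by (auto intro!: sum.cong)
  thus "mat_app (mult_op f) w x = f x * w x"
    using assms by (cases "w x = 0") (simp_all add: fin_vec_def sum.delta)
qed

lemma bounded_mult_op:
  assumes B: "\<And>x. cmod (f x) \<le> B"
  shows "bounded_mat (mult_op f)"
  unfolding bounded_mat_def
proof (intro exI allI impI conjI)
  fix w :: "'a \<Rightarrow> complex" assume w: "fin_vec w"
  define A where "A = {y. w y \<noteq> 0}"
  have fin: "finite A" using w by (simp add: fin_vec_def A_def)
  have B0: "0 \<le> B" using B[of undefined] norm_ge_zero order_trans by blast
  note app = mat_app_mult_op[OF w]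
  show "(\<lambda>x. (cmod (mat_app (mult_op f) w x))\<^sup>2) summable_on UNIV"
    unfolding app by (rule summable_finite_support[OF fin]) (auto simp: A_def)
  have "(\<Sum>x\<in>A. (cmod (f x * w x))\<^sup>2) \<le> (\<Sum>x\<in>A. B\<^sup>2 * (cmod (w x))\<^sup>2)"
  proof (rule sum_mono)
    fix x
    have "cmod (f x * w x) \<le> B * cmod (w x)" by (simp add: norm_mult mult_right_mono B)
    thus "(cmod (f x * w x))\<^sup>2 \<le> B\<^sup>2 * (cmod (w x))\<^sup>2"
      by (metis norm_ge_zero power_mono power_mult_distrib)
  qed
  also have "\<dots> = B\<^sup>2 * (\<Sum>x\<in>A. (cmod (w x))\<^sup>2)" by (simp add: sum_distrib_left)
  finally have "sqrt (\<Sum>x\<in>A. (cmod (f x * w x))\<^sup>2) \<le> sqrt (B\<^sup>2 * (\<Sum>x\<in>A. (cmod (w x))\<^sup>2))"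
    by (rule real_sqrt_le_mono)
  also have "\<dots> = B * sqrt (\<Sum>x\<in>A. (cmod (w x))\<^sup>2)" using B0 by (simp add: real_sqrt_mult)
  finally have "sqrt (\<Sum>x\<in>A. (cmod (f x * w x))\<^sup>2) \<le> B * sqrt (\<Sum>x\<in>A. (cmod (w x))\<^sup>2)" .
  thus "l2_norm (mat_app (mult_op f) w) \<le> B * l2_norm w"
    unfolding app by (subst (1 2) l2_norm_finite_support[OF fin]) (auto simp: A_def)
qed

lemma bounded_mult_op_continuous:
  fixes f :: "'x::topological_space \<Rightarrow> complex"
  assumes "compact (UNIV :: 'x set)" "cont_fun f"
  shows "bounded_mat (mult_op f)"
proof -
  have "compact (range f)"
    using compact_continuous_image assms unfolding cont_fun_def by blast
  hence "bounded (range f)" by (rule compact_imp_bounded)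
  then obtain B where "\<And>x. norm (f x) \<le> B" unfolding bounded_iff by blast
  thus ?thesis by (rule bounded_mult_op)
qed

lemma mult_op_eq_zero_iff: "mult_op f = mat_zero \<longleftrightarrow> f = (\<lambda>_. 0)"
  unfolding mult_op_def mat_zero_def by (metis (full_types))

(* Fibres of a covering map of a compact Hausdorff space are finite: a fibre is compact
   and discrete, since T is injective on a neighbourhood of each of its points. *)
lemma covering_space_finite_fibres:
  fixes T :: "'x::t2_space \<Rightarrow> 'x"
  assumes cpt: "compact (UNIV :: 'x set)"
    and cov: "covering_space (UNIV :: 'x set) T (UNIV :: 'x set)"
  shows "finite (T -` {y})"
proof -
  have "closed (T -` {y})"
    by (rule closed_vimage[OF closed_singleton covering_space_imp_continuous[OF cov]])
  hence fibre_compact: "compact (T -` {y})"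
    using cpt compact_Int_closed[of UNIV "T -` {y}"] by simp
  have "\<exists>U. z \<in> U \<and> open U \<and> inj_on T U" for z
  proof -
    obtain U u q where "z \<in> U" "openin (top_of_set UNIV) U" "homeomorphism U u T q"
      by (rule covering_space_local_homeomorphism[OF cov UNIV_I])
    moreover from \<open>homeomorphism U u T q\<close> have "inj_on T U"
      unfolding homeomorphism_def by (metis inj_on_inverseI)
    ultimately show ?thesis by auto
  qed
  then obtain U where U: "\<And>z. z \<in> U z \<and> open (U z) \<and> inj_on T (U z)" by metis
  obtain C where C: "C \<subseteq> T -` {y}" "finite C" "T -` {y} \<subseteq> \<Union> (U ` C)"
    by (rule compactE_image[OF fibre_compact, where C = "T -` {y}" and f = U]) (use U in blast)+
  have "T -` {y} \<subseteq> C"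
  proof
    fix w assume w: "w \<in> T -` {y}"
    then obtain c where "c \<in> C" "w \<in> U c" using C by blast
    thus "w \<in> C" using U[of c] C w by (metis inj_onD vimage_singleton_eq subsetD)
  qed
  thus ?thesis using C finite_subset by blast
qed

lemma fibre_size_ge_1:
  assumes "finite (T -` {y})" "surj T"
  shows "fibre_size T y \<ge> 1"
proof -
  have "T -` {y} \<noteq> {}" using assms(2) by (metis empty_iff surjD vimage_singleton_eq)
  hence "card (T -` {y}) \<ge> 1" using assms(1) by (simp add: Suc_le_eq card_gt_0_iff)
  thus ?thesis unfolding L0_def by simp
qed

lemma mat_app_S_op:
  assumes "fin_vec w"
  shows "mat_app (S_op T) w = (\<lambda>x. complex_of_real (1 / sqrt (fibre_size T (T x))) * w (T x))"
proof (intro ext)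
  fix x
  have "mat_app (S_op T) w x = (\<Sum>y\<in>{y. w y \<noteq> 0}.
          if T x = y then complex_of_real (1 / sqrt (fibre_size T y)) * w y else 0)"
    unfolding mat_app_def S_op_def by (auto intro!: sum.cong)
  thus "mat_app (S_op T) w x = complex_of_real (1 / sqrt (fibre_size T (T x))) * w (T x)"
    using assms by (cases "w (T x) = 0") (simp_all add: fin_vec_def sum.delta)
qed

(* S is an isometry on finitely supported vectors: the mass |w y|^2 is spread
   evenly over the N(y) points of the fibre over y. *)
lemma bounded_S_op:
  assumes fib: "\<And>y. finite (T -` {y})" and sur: "surj T"
  shows "bounded_mat (S_op T)"
  unfolding bounded_mat_def
proof (intro exI[of _ 1] allI impI conjI)
  fix w :: "'a \<Rightarrow> complex" assume w: "fin_vec w"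
  define c where "c x = complex_of_real (1 / sqrt (fibre_size T (T x))) * w (T x)" for x
  define A where "A = {y. w y \<noteq> 0}"
  have fin: "finite A" using w by (simp add: fin_vec_def A_def)
  define B where "B = (\<Union>y\<in>A. T -` {y})"
  have finB: "finite B" unfolding B_def using fin fib by blast
  have app: "mat_app (S_op T) w = c" unfolding c_def by (rule mat_app_S_op[OF w])
  have outside: "\<And>x. x \<notin> B \<Longrightarrow> c x = 0" unfolding B_def A_def c_def by auto
  show "(\<lambda>x. (cmod (mat_app (S_op T) w x))\<^sup>2) summable_on UNIV"
    unfolding app by (rule summable_finite_support[OF finB]) (auto simp: outside)
  have fibre_mass: "(\<Sum>x\<in>T -` {y}. (cmod (c x))\<^sup>2) = (cmod (w y))\<^sup>2" for y
  proof -
    have N: "fibre_size T y = real (card (T -` {y}))" "fibre_size T y \<ge> 1"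
      using fibre_size_ge_1[OF fib sur] by (auto simp: L0_def)
    have "(\<Sum>x\<in>T -` {y}. (cmod (c x))\<^sup>2) = (\<Sum>x\<in>T -` {y}. (cmod (w y))\<^sup>2 / fibre_size T y)"
      using N(2) by (intro sum.cong) (auto simp: c_def norm_divide power_divide)
    thus ?thesis using N by simp
  qed
  have "(\<Sum>x\<in>B. (cmod (c x))\<^sup>2) = (\<Sum>y\<in>A. \<Sum>x\<in>T -` {y}. (cmod (c x))\<^sup>2)"
    unfolding B_def by (rule sum.UNION_disjoint[OF fin]) (auto simp: fib)
  also have "\<dots> = (\<Sum>y\<in>A. (cmod (w y))\<^sup>2)" by (simp add: fibre_mass)
  moreover have "l2_norm w = sqrt (\<Sum>y\<in>A. (cmod (w y))\<^sup>2)"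
    by (rule l2_norm_finite_support[OF fin]) (auto simp: A_def)
  moreover have "l2_norm c = sqrt (\<Sum>x\<in>B. (cmod (c x))\<^sup>2)"
    by (rule l2_norm_finite_support[OF finB outside])
  ultimately show "l2_norm (mat_app (S_op T) w) \<le> 1 * l2_norm w" unfolding app by simp
qed

lemma S_adj_mult_op_S_entry:
  assumes fib: "finite (T -` {x})" and sur: "surj T"
  shows "mat_mult (mat_mult (mat_adj (S_op T)) (mult_op f)) (S_op T) x y
           = (if x = y then (\<Sum>z\<in>T -` {x}. f z) / complex_of_real (fibre_size T x) else 0)"
proof -
  have N: "fibre_size T x \<ge> 1" by (rule fibre_size_ge_1[OF fib sur])
  have "mat_mult (mat_mult (mat_adj (S_op T)) (mult_op f)) (S_op T) x y
      = (\<Sum>z\<in>T -` {x}. cnj (S_op T z x) * f z * S_op T z y)"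
    unfolding mat_mult_mult_op_right unfolding mat_mult_def mat_adj_def
    by (rule infsum_finite_support[OF fib]) (auto simp: S_op_def)
  also have "\<dots> = (\<Sum>z\<in>T -` {x}. if x = y then f z * complex_of_real (1 / fibre_size T x) else 0)"
    using N by (intro sum.cong) (auto simp: S_op_def simp flip: of_real_mult)
  finally show ?thesis
    by (simp add: divide_inverse sum_distrib_right of_real_inverse flip: sum_divide_distrib)
qed

lemma S_adj_mult_op_S:
  assumes fib: "\<And>y. finite (T -` {y})" and sur: "surj T"
  shows "mat_mult (mat_mult (mat_adj (S_op T)) (mult_op f)) (S_op T) = mult_op (Lcal T f)"
  by (intro ext) (simp add: S_adj_mult_op_S_entry[OF fib sur]; simp add: mult_op_def Lcal_def L0_def)

(* S is an isometry: S^* S = S^* M_1 S = M_(L 1) = 1. *)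
lemma S_adj_S:
  assumes fib: "\<And>y. finite (T -` {y})" and sur: "surj T"
  shows "mat_mult (mat_adj (S_op T)) (S_op T) = mat_id"
proof -
  have "mat_mult (mat_adj (S_op T)) (S_op T)
        = mat_mult (mat_mult (mat_adj (S_op T)) (mult_op (\<lambda>_. 1))) (S_op T)"
    by (simp add: mat_mult_mult_op_right)
  also have "\<dots> = mat_id"
  proof (intro ext)
    fix x y
    have "fibre_size T x \<ge> 1" by (rule fibre_size_ge_1[OF fib sur])
    thus "mat_mult (mat_mult (mat_adj (S_op T)) (mult_op (\<lambda>_. 1))) (S_op T) x y = mat_id x y"
      by (simp add: S_adj_mult_op_S_entry[OF fib sur]; auto simp: mat_id_def L0_def)
  qed
  finally show ?thesis .
qed

lemma S_mult_op_commute: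
  "mat_mult (S_op T) (mult_op f) = mat_mult (mult_op (alpha_op T f)) (S_op T)"
  unfolding mat_mult_mult_op_right mat_mult_mult_op_left
  by (auto simp: S_op_def alpha_op_def fun_eq_iff)

lemma mult_op_S_S_adj_mult_op:
  "mat_mult (mat_mult (mat_mult (mult_op u) (S_op T)) (mat_adj (S_op T))) (mult_op u)
   = (\<lambda>x y. u x * (if T x = T y then complex_of_real (1 / fibre_size T (T x)) else 0) * u y)"
proof (intro ext)
  fix x y
  have "mat_mult (mat_mult (mult_op u) (S_op T)) (mat_adj (S_op T)) x y
      = u x * (if T x = T y then complex_of_real (1 / fibre_size T (T x)) else 0)"
    unfolding mat_mult_mult_op_left unfolding mat_mult_def mat_adj_def
    by (subst infsum_finite_support[of "{T x}"])
       (auto simp: S_op_def L0_def simp flip: of_real_mult)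
  thus "mat_mult (mat_mult (mat_mult (mult_op u) (S_op T)) (mat_adj (S_op T))) (mult_op u) x y
      = u x * (if T x = T y then complex_of_real (1 / fibre_size T (T x)) else 0) * u y"
    unfolding mat_mult_mult_op_right by simp
qed

(* Entry (x,y) of M_(u_i) S S^* M_(u_i) is v_i(x) on the diagonal and 0 off it:
   distinct points of one fibre cannot both lie in the support of v_i \<subseteq> V_i. *)
lemma u_kernel_entry:
  assumes adm: "admissible_cover T t V v" and i: "i < t" and N: "fibre_size T (T x) \<ge> 1"
  shows "u_fun T (v i) x * (if T x = T y then complex_of_real (1 / fibre_size T (T x)) else 0)
           * u_fun T (v i) y
         = (if x = y then complex_of_real (v i x) else 0)"
proof -
  have v_nonneg: "0 \<le> v i z" for z using adm i unfolding admissible_cover_def by blast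
  have u: "u_fun T (v i) z = complex_of_real (sqrt (fibre_size T (T z) * v i z))" for z
    unfolding u_fun_def alpha_op_def by simp
  consider "x = y" | "x \<noteq> y" "T x = T y" | "T x \<noteq> T y" by blast
  thus ?thesis
  proof cases
    case 1
    have "sqrt (fibre_size T (T x) * v i x) * sqrt (fibre_size T (T x) * v i x) / fibre_size T (T x)
          = v i x"
      using N v_nonneg[of x] by (simp add: real_sqrt_mult_self)
    thus ?thesis using 1 unfolding u by (simp flip: of_real_mult of_real_divide)
  next
    case 2
    have "v i x = 0 \<or> v i y = 0"
    proof (rule ccontr)
      assume "\<not> (v i x = 0 \<or> v i y = 0)"
      hence "x \<in> closure {z. v i z \<noteq> 0}" "y \<in> closure {z. v i z \<noteq> 0}"
        by (auto intro: closure_subset[THEN subsetD])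
      hence "x \<in> V i" "y \<in> V i" using adm i unfolding admissible_cover_def by blast+
      moreover have "inj_on T (V i)" using adm i unfolding admissible_cover_def by blast
      ultimately show False using 2 by (meson inj_onD)
    qed
    thus ?thesis using 2 unfolding u by force
  qed auto
qed

(* The relation 1 = \<Sum>_i u_i S S^* u_i for the pair (M, S): it reduces to \<Sum>_i v_i = 1. *)
lemma partition_relation:
  fixes T :: "'x::topological_space \<Rightarrow> 'x"
  assumes adm: "admissible_cover T t V v"
    and fib: "\<And>y. finite (T -` {y})" and sur: "surj T"
  shows "mat_id = (\<lambda>x y. \<Sum>i<t. mat_mult (mat_mult (mat_mult (mult_op (u_fun T (v i))) (S_op T))
                                   (mat_adj (S_op T))) (mult_op (u_fun T (v i))) x y)"
proof (intro ext)
  fix x y :: 'x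
  have "(\<Sum>i<t. mat_mult (mat_mult (mat_mult (mult_op (u_fun T (v i))) (S_op T))
                  (mat_adj (S_op T))) (mult_op (u_fun T (v i))) x y)
        = (\<Sum>i<t. if x = y then complex_of_real (v i x) else 0)"
    unfolding mult_op_S_S_adj_mult_op
    by (intro sum.cong) (simp_all add: u_kernel_entry[OF adm _ fibre_size_ge_1[OF fib sur]])
  also have "\<dots> = mat_id x y"
    using adm unfolding admissible_cover_def mat_id_def by (simp flip: of_real_sum)
  finally show "mat_id x y = (\<Sum>i<t. mat_mult (mat_mult (mat_mult (mult_op (u_fun T (v i)))
                   (S_op T)) (mat_adj (S_op T))) (mult_op (u_fun T (v i))) x y)" by simp
qed

lemma mult_op_S_op_crossed_relations:
  fixes T :: "'x::t2_space \<Rightarrow> 'x"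
  assumes cpt: "compact (UNIV :: 'x set)"
    and cov: "covering_space (UNIV :: 'x set) T (UNIV :: 'x set)"
    and adm: "admissible_cover T t V v"
  shows "crossed_relations_l2 T t v mult_op (S_op T)"
proof -
  have fib: "\<And>y. finite (T -` {y})" by (rule covering_space_finite_fibres[OF cpt cov])
  have sur: "surj T" by (rule covering_space_imp_surjective[OF cov])
  show ?thesis
    unfolding crossed_relations_l2_def
  proof (intro conjI allI impI)
    show "\<And>f :: 'x \<Rightarrow> complex. cont_fun f \<Longrightarrow> bounded_mat (mult_op f)"
      by (rule bounded_mult_op_continuous[OF cpt])
    show "\<And>f g. mult_op (\<lambda>x. f x + g x) = mat_add (mult_op f) (mult_op g)"
      by (auto simp: mult_op_def mat_add_def fun_eq_iff)
    show "\<And>f g. mult_op (\<lambda>x. f x * g x) = mat_mult (mult_op f) (mult_op g)"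
      unfolding mat_mult_mult_op_left by (auto simp: mult_op_def fun_eq_iff)
    show "\<And>c f. mult_op (\<lambda>x. c * f x) = mat_scale c (mult_op f)"
      by (auto simp: mult_op_def mat_scale_def fun_eq_iff)
    show "\<And>f. mult_op (\<lambda>x. cnj (f x)) = mat_adj (mult_op f)"
      by (auto simp: mult_op_def mat_adj_def fun_eq_iff)
    show "mult_op (\<lambda>_. 1) = mat_id" by (simp add: mult_op_def mat_id_def)
    show "bounded_mat (S_op T)" by (rule bounded_S_op[OF fib sur])
    show "mat_mult (mat_adj (S_op T)) (S_op T) = mat_id" by (rule S_adj_S[OF fib sur])
    show "\<And>f. mat_mult (S_op T) (mult_op f) = mat_mult (mult_op (alpha_op T f)) (S_op T)"
      by (rule S_mult_op_commute)
    show "\<And>f. mat_mult (mat_mult (mat_adj (S_op T)) (mult_op f)) (S_op T) = mult_op (Lcal T f)"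
      by (rule S_adj_mult_op_S[OF fib sur])
  qed (rule partition_relation[OF adm fib sur])
qed

lemma crossed_relations_zero:
  fixes \<iota> :: "('x::topological_space \<Rightarrow> complex) \<Rightarrow> 'a::cstar_algebra"
  assumes "crossed_relations T t v \<iota> s"
  shows "\<iota> (\<lambda>_. 0) = 0"
proof -
  have "cont_fun (\<lambda>_::'x. 0 :: complex)" by (simp add: cont_fun_def)
  hence "\<iota> (\<lambda>x::'x. 0 * (0 :: complex)) = cscale 0 (\<iota> (\<lambda>_. 0))"
    using assms unfolding crossed_relations_def by blast
  thus ?thesis using cscale_of_real[of 0 "\<iota> (\<lambda>_. 0)"] by simp
qed

theorem proposition3p1:
  fixes T :: "'x::t2_space \<Rightarrow> 'x"
    and t :: nat and V :: "nat \<Rightarrow> 'x set" and v :: "nat \<Rightarrow> 'x \<Rightarrow> real"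
    and \<iota> :: "('x \<Rightarrow> complex) \<Rightarrow> 'a::cstar_algebra" and s :: 'a
  assumes "compact (UNIV :: 'x set)"
    and "covering_space (UNIV :: 'x set) T (UNIV :: 'x set)"
    and "admissible_cover T t V v"
    and "is_crossed_product T t v \<iota> s"
  shows "\<exists>\<psi> :: 'a \<Rightarrow> 'x bmat.
           is_rep \<psi> \<and>
           (\<forall>f. cont_fun f \<longrightarrow> \<psi> (\<iota> f) = mult_op f) \<and>
           \<psi> s = S_op T \<and>
           (\<forall>f. cont_fun f \<longrightarrow> \<psi> (\<iota> f) = mat_zero \<longrightarrow> \<iota> f = 0)"
proof -
  have "crossed_relations_l2 T t v mult_op (S_op T)"
    by (rule mult_op_S_op_crossed_relations[OF assms(1-3)])
  then obtain \<psi> where \<psi>: "is_rep \<psi>" "\<forall>f. cont_fun f \<longrightarrow> \<psi> (\<iota> f) = mult_op f" "\<psi> s = S_op T"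
    using assms(4) unfolding is_crossed_product_def by blast
  have "\<iota> f = 0" if "cont_fun f" "\<psi> (\<iota> f) = mat_zero" for f
  proof -
    have "f = (\<lambda>_. 0)" using that \<psi>(2) mult_op_eq_zero_iff by metis
    thus ?thesis
      using crossed_relations_zero assms(4) unfolding is_crossed_product_def by blast
  qed
  thus ?thesis using \<psi> by blast
qed

end
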